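(* Let $Q$ be a flow on a digraph $(V,E)$ with $V$ countably infinite. If there exists an invading sequence $\{V_n\}$ such that $\sup\{Q(x,y): (x,y)\in E,\ \{x,y\}\cap(V\setminus V_n)\neq\emptyset\}$ does not converge to $0$ as $n\to\infty$, then $Q$ is not finitely decomposable.
   Context: A flow on $(V,E)$ is a map $Q:E\to[0,+\infty)$. An invading sequence is a sequence of finite sets $V_n\subseteq V$ with $V_n\subseteq V_{n+1}$ and $\bigcup_nV_n=V$. For a directed path $\gamma=(x_0,\dots,x_n)$, $Q_\gamma(x,y)=1$ if $(x,y)=(x_i,x_{i+1})$ for some $i$ and $0$ otherwise. $Q$ is finitely decomposable if $Q=\sum_nq_nQ_{\gamma_n}$ pointwise for a countable family of finite self-avoiding directed paths $\gamma_n$ in $(V,E)$ and weights $q_n\ge0$ with $\sum_nq_n<\infty$. *)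

theory Defs
  imports "HOL-Analysis.Analysis"
begin

text \<open>A flow is a map Q defined on E with nonnegative values (represented by a
  total function on pairs; only values on E matter).\<close>

definition digraph :: "'a set \<Rightarrow> ('a \<times> 'a) set \<Rightarrow> bool" where
  "digraph V E \<longleftrightarrow> E \<subseteq> V \<times> V"

definition is_flow :: "'a set \<Rightarrow> ('a \<times> 'a) set \<Rightarrow> ('a \<times> 'a \<Rightarrow> real) \<Rightarrow> bool" where
  "is_flow V E Q \<longleftrightarrow> (\<forall>e\<in>E. 0 \<le> Q e)"

definition invading_sequence :: "'a set \<Rightarrow> (nat \<Rightarrow> 'a set) \<Rightarrow> bool" where
  "invading_sequence V Vs \<longleftrightarrow>
     (\<forall>n. finite (Vs n) \<and> Vs n \<subseteq> V \<and> Vs n \<subseteq> Vs (Suc n)) \<and> (\<Union>n. Vs n) = V"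

definition path_edges :: "'a list \<Rightarrow> ('a \<times> 'a) set" where
  "path_edges xs = {(xs ! i, xs ! Suc i) | i. Suc i < length xs}"

definition sa_path :: "'a set \<Rightarrow> ('a \<times> 'a) set \<Rightarrow> 'a list \<Rightarrow> bool" where
  "sa_path V E xs \<longleftrightarrow> xs \<noteq> [] \<and> set xs \<subseteq> V \<and> distinct xs \<and> path_edges xs \<subseteq> E"

definition path_flow :: "'a list \<Rightarrow> 'a \<times> 'a \<Rightarrow> real" where
  "path_flow xs e = (if e \<in> path_edges xs then 1 else 0)"

text \<open>Finitely decomposable: Q = sum_n q_n Q_{gamma_n} pointwise on E for a countable
  family (indexed by nat; finite families are padded with zero weights) of finite
  self-avoiding directed paths and weights q_n \<ge> 0 with sum q_n < \<infinity>.\<close>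

definition finitely_decomposable ::
  "'a set \<Rightarrow> ('a \<times> 'a) set \<Rightarrow> ('a \<times> 'a \<Rightarrow> real) \<Rightarrow> bool" where
  "finitely_decomposable V E Q \<longleftrightarrow>
     (\<exists>(\<gamma> :: nat \<Rightarrow> 'a list) (q :: nat \<Rightarrow> real).
        (\<forall>n. sa_path V E (\<gamma> n) \<and> 0 \<le> q n) \<and> summable q \<and>
        (\<forall>e\<in>E. (\<lambda>n. q n * path_flow (\<gamma> n) e) sums Q e))"

text \<open>sup of Q over edges not contained in V_n, valued in the extended reals
  (to allow an unbounded set); the empty supremum of nonnegative values is 0.\<close>

definition boundary_sup ::
  "('a \<times> 'a) set \<Rightarrow> ('a \<times> 'a \<Rightarrow> real) \<Rightarrow> 'a set \<Rightarrow> ereal" where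
  "boundary_sup E Q W =
     Sup (insert 0 {ereal (Q (x, y)) | x y. (x, y) \<in> E \<and> {x, y} \<inter> (- W) \<noteq> {}})"

end

theory Submission
  imports Defs
begin

text \<open>Given a decomposition \<open>Q = (\<Sum>n. q n * Q\<^bsub>\<gamma> n\<^esub>)\<close> and \<open>\<epsilon> > 0\<close>, choose \<open>N\<close> with
  \<open>(\<Sum>n\<ge>N. q n) < \<epsilon>\<close>. The finitely many vertices of \<open>\<gamma> 0, \<dots>, \<gamma> (N - 1)\<close> lie in \<open>V\<^sub>m\<close>
  for all large \<open>m\<close>, so an edge meeting \<open>V - V\<^sub>m\<close> is carried only by the paths \<open>\<gamma> n\<close> with
  \<open>n \<ge> N\<close> and its flow is at most \<open>\<epsilon>\<close>.\<close>

lemma eventually_finite_subset_incseq: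
  assumes "incseq Vs" "finite S" "S \<subseteq> (\<Union>n. Vs n)"
  shows "eventually (\<lambda>m. S \<subseteq> Vs m) sequentially"
proof -
  have "eventually (\<lambda>m. x \<in> Vs m) sequentially" if "x \<in> S" for x
  proof -
    obtain k where "x \<in> Vs k" using \<open>x \<in> S\<close> assms(3) by blast
    then show ?thesis
      using \<open>incseq Vs\<close> unfolding eventually_sequentially incseq_def by blast
  qed
  then have "eventually (\<lambda>m. \<forall>x\<in>S. x \<in> Vs m) sequentially"
    using \<open>finite S\<close> by (intro eventually_ball_finite) auto
  then show ?thesis
    by (simp add: subset_eq)
qed

lemma path_edges_subset_set: "path_edges xs \<subseteq> set xs \<times> set xs"
  unfolding path_edges_def by auto

lemma sums_le_tail_if_initial_zero:
  fixes q c :: "nat \<Rightarrow> real"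
  assumes sums: "(\<lambda>n. q n * c n) sums s" and "summable q"
    and "\<And>n. 0 \<le> q n" and "\<And>n. c n \<le> 1" and zero: "\<And>n. n < N \<Longrightarrow> c n = 0"
  shows "s \<le> (\<Sum>i. q (i + N))"
proof -
  have "(\<Sum>i<N. q i * c i) = 0"
    using zero by simp
  then have shifted: "(\<lambda>i. q (i + N) * c (i + N)) sums s"
    using sums_split_initial_segment[OF sums, of N] by simp
  have tail: "(\<lambda>i. q (i + N)) sums (\<Sum>i. q (i + N))"
    using summable_ignore_initial_segment[OF \<open>summable q\<close>] by (rule summable_sums)
  show ?thesis
    by (rule sums_le[OF _ shifted tail]) (rule mult_left_le[OF assms(4) assms(3)])
qed

lemma boundary_sup_nonneg: "0 \<le> boundary_sup E Q W"
  unfolding boundary_sup_def by (rule Sup_upper) simp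

lemma boundary_sup_le:
  assumes "0 \<le> c" and "\<And>x y. (x, y) \<in> E \<Longrightarrow> {x, y} \<inter> - W \<noteq> {} \<Longrightarrow> Q (x, y) \<le> c"
  shows "boundary_sup E Q W \<le> ereal c"
  unfolding boundary_sup_def using assms by (auto intro!: Sup_least)

lemma ereal_nonneg_tendsto_zeroI:
  fixes f :: "nat \<Rightarrow> ereal"
  assumes "\<And>n. 0 \<le> f n" and "\<And>\<epsilon>. 0 < \<epsilon> \<Longrightarrow> eventually (\<lambda>n. f n \<le> ereal \<epsilon>) sequentially"
  shows "f \<longlonglongrightarrow> 0"
proof (rule order_tendstoI)
  fix a :: ereal
  assume "a < 0"
  then show "eventually (\<lambda>n. a < f n) sequentially"
    using assms(1) less_le_trans by (blast intro: always_eventually)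
next
  fix a :: ereal
  assume "0 < a"
  then obtain \<epsilon> where "0 < ereal \<epsilon>" and "ereal \<epsilon> < a"
    using ereal_dense2 by blast
  then have "eventually (\<lambda>n. f n \<le> ereal \<epsilon>) sequentially"
    by (intro assms(2)) simp
  then show "eventually (\<lambda>n. f n < a) sequentially"
    by (rule eventually_mono) (meson \<open>ereal \<epsilon> < a\<close> le_less_trans)
qed

lemma finitely_decomposable_boundary_sup_tendsto_zero:
  assumes "finitely_decomposable V E Q" and "invading_sequence V Vs"
  shows "(\<lambda>n. boundary_sup E Q (Vs n)) \<longlonglongrightarrow> 0"
proof -
  obtain \<gamma> q where paths: "\<And>n. sa_path V E (\<gamma> n)" and q_nonneg: "\<And>n. 0 \<le> q n"
    and "summable q" and decomp: "\<And>e. e \<in> E \<Longrightarrow> (\<lambda>n. q n * path_flow (\<gamma> n) e) sums Q e"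
    using assms(1) unfolding finitely_decomposable_def by blast
  have "incseq Vs" and V_eq: "(\<Union>n. Vs n) = V"
    using assms(2) unfolding invading_sequence_def by (auto intro: incseq_SucI)
  have small_eventually: "eventually (\<lambda>m. boundary_sup E Q (Vs m) \<le> ereal \<epsilon>) sequentially"
    if "0 < \<epsilon>" for \<epsilon>
  proof -
    obtain N where tail: "(\<Sum>i. q (i + N)) < \<epsilon>"
      using suminf_exist_split[OF \<open>0 < \<epsilon>\<close> \<open>summable q\<close>] by (metis order_refl abs_less_iff real_norm_def)
    define S where "S = (\<Union>n<N. set (\<gamma> n))"
    have "finite S"
      unfolding S_def by simp
    moreover have "S \<subseteq> (\<Union>n. Vs n)"
      using paths V_eq unfolding S_def sa_path_def by auto
    ultimately have "eventually (\<lambda>m. S \<subseteq> Vs m) sequentially"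
      by (rule eventually_finite_subset_incseq[OF \<open>incseq Vs\<close>])
    moreover have "boundary_sup E Q (Vs m) \<le> ereal \<epsilon>" if "S \<subseteq> Vs m" for m
    proof (rule boundary_sup_le)
      fix x y
      assume "(x, y) \<in> E" and leaves: "{x, y} \<inter> - Vs m \<noteq> {}"
      have off_initial_paths: "path_flow (\<gamma> n) (x, y) = 0" if "n < N" for n
      proof -
        have "set (\<gamma> n) \<subseteq> Vs m"
          using \<open>S \<subseteq> Vs m\<close> \<open>n < N\<close> unfolding S_def by blast
        then have "(x, y) \<notin> path_edges (\<gamma> n)"
          using path_edges_subset_set[of "\<gamma> n"] leaves by blast
        then show ?thesis
          unfolding path_flow_def by simp
      qed
      have "Q (x, y) \<le> (\<Sum>i. q (i + N))"
        by (rule sums_le_tail_if_initial_zero[OF decomp[OF \<open>(x, y) \<in> E\<close>] \<open>summable q\<close>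
              q_nonneg _ off_initial_paths]) (simp add: path_flow_def)
      then show "Q (x, y) \<le> \<epsilon>"
        using tail by simp
    qed (use \<open>0 < \<epsilon>\<close> in simp)
    ultimately show ?thesis
      by (rule eventually_mono)
  qed
  show ?thesis
    by (rule ereal_nonneg_tendsto_zeroI[OF boundary_sup_nonneg small_eventually])
qed

theorem proposition2p5:
  fixes V :: "'a set" and E :: "('a \<times> 'a) set" and Q :: "'a \<times> 'a \<Rightarrow> real"
  assumes "digraph V E"
    and "is_flow V E Q"
    and "countable V" and "infinite V"
    and "\<exists>Vs. invading_sequence V Vs \<and>
               \<not> ((\<lambda>n. boundary_sup E Q (Vs n)) \<longlonglongrightarrow> 0)"
  shows "\<not> finitely_decomposable V E Q"
proof
  assume "finitely_decomposable V E Q"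
  moreover obtain Vs where "invading_sequence V Vs"
    and "\<not> (\<lambda>n. boundary_sup E Q (Vs n)) \<longlonglongrightarrow> 0"
    using assms(5) by blast
  ultimately show False
    using finitely_decomposable_boundary_sup_tendsto_zero by blast
qed

end
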